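(* Let $\mathcal F=\{F_1,\dots,F_k\}$, $\mathcal I=\{0,1\}^k\setminus\{(0,\dots,0)\}$, and let $\mathcal F_{asc}$ be a nonempty ascending class of nonempty subsets of $\mathcal F$. Let $\mathbf A$ be the matrix with rows indexed by $\mathcal F_{des}=2^{\mathcal F}\setminus\mathcal F_{asc}\setminus\{\varnothing\}$ and columns indexed by $\mathcal I$, with entry $1$ in row $W$, column $\boldsymbol i$ if $W\subseteq\phi(\boldsymbol i)$ and $0$ otherwise. Then the hierarchical AS model $HAS(\mathcal F_{asc})$ is the relational model generated by $\mathbf A$, i.e. $HAS(\mathcal F_{asc})=\{\boldsymbol p>0 \text{ probability distribution on }\mathcal I:\ \log\boldsymbol p=\mathbf A^\top\boldsymbol\beta\text{ for some }\boldsymbol\beta\}$, and this relational model has no overall effect: the all-ones vector of length $2^k-1$ does not belong to the row space of $\mathbf A$.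
   Context: For $\boldsymbol i\in\mathcal I$, $\phi(\boldsymbol i)$ is the set of features whose coordinate in $\boldsymbol i$ equals $1$; write $p(V)$ for the probability of the cell with $\phi(\boldsymbol i)=V$. A class of subsets is ascending if it is closed under taking supersets within $\mathcal F$. For nonempty $V\subseteq\mathcal F$, $\mathrm{CASR}(V\mid\mathcal F\setminus V=\mathbf 0)=\prod_{\varnothing\ne U\subseteq V,\,|U|\equiv|V|\,(2)}p(U)\big/\prod_{\varnothing\ne U\subseteq V,\,|U|\not\equiv|V|\,(2)}p(U)$ (called $\mathrm{ASR}(\mathcal F)$ when $V=\mathcal F$). The hierarchical Aitchison–Silvey model $HAS(\mathcal F_{asc})$ is the set of strictly positive probability distributions $\boldsymbol p$ on $\mathcal I$ with $\mathrm{CASR}(V\mid\mathcal F\setminus V=\mathbf 0)=1$ for all $V\in\mathcal F_{asc}$; equivalently, writing $\log p(\boldsymbol i)=\sum_{\varnothing\ne V\subseteq\phi(\boldsymbol i)}\beta_V$ (a bijective reparameterization), those with $\beta_V=0$ for all $V\in\mathcal F_{asc}$. *)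

theory Defs
  imports Complex_Main
begin

(* Features F = UNIV :: 'f set (a finite type with k = CARD('f) elements).
   A cell i in {0,1}^k is a function 'f => bool; I excludes the all-zero cell. *)

definition cells :: "('f::finite \<Rightarrow> bool) set" where
  "cells = {i. i \<noteq> (\<lambda>_. False)}"

definition phi :: "('f \<Rightarrow> bool) \<Rightarrow> 'f set" where
  "phi i = {f. i f}"

definition cellp :: "(('f \<Rightarrow> bool) \<Rightarrow> real) \<Rightarrow> 'f set \<Rightarrow> real" where
  "cellp p U = p (\<lambda>f. f \<in> U)"

definition CASR :: "(('f::finite \<Rightarrow> bool) \<Rightarrow> real) \<Rightarrow> 'f set \<Rightarrow> real" where
  "CASR p V =
     (\<Prod>U\<in>{U. U \<subseteq> V \<and> U \<noteq> {} \<and> even (card U + card V)}. cellp p U) /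
     (\<Prod>U\<in>{U. U \<subseteq> V \<and> U \<noteq> {} \<and> odd (card U + card V)}. cellp p U)"

definition pos_prob_dist :: "(('f::finite \<Rightarrow> bool) \<Rightarrow> real) \<Rightarrow> bool" where
  "pos_prob_dist p \<longleftrightarrow> (\<forall>i\<in>cells. p i > 0) \<and> (\<Sum>i\<in>cells. p i) = 1"

definition HAS :: "'f::finite set set \<Rightarrow> (('f \<Rightarrow> bool) \<Rightarrow> real) set" where
  "HAS Fasc = {p. pos_prob_dist p \<and> (\<forall>V\<in>Fasc. CASR p V = 1)}"

definition ascending :: "'f set set \<Rightarrow> bool" where
  "ascending C \<longleftrightarrow> (\<forall>V\<in>C. \<forall>W. V \<subseteq> W \<longrightarrow> W \<in> C)"

definition Fdes :: "'f set set \<Rightarrow> 'f set set" where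
  "Fdes Fasc = {W. W \<notin> Fasc \<and> W \<noteq> {}}"

definition Amat :: "'f set \<Rightarrow> ('f \<Rightarrow> bool) \<Rightarrow> real" where
  "Amat W i = (if W \<subseteq> phi i then 1 else 0)"

definition relational_model ::
  "'r set \<Rightarrow> ('r \<Rightarrow> ('f::finite \<Rightarrow> bool) \<Rightarrow> real) \<Rightarrow> (('f \<Rightarrow> bool) \<Rightarrow> real) set" where
  "relational_model R A =
     {p. pos_prob_dist p \<and> (\<exists>\<beta>. \<forall>i\<in>cells. ln (p i) = (\<Sum>W\<in>R. A W i * \<beta> W))}"

definition has_overall_effect :: "'r set \<Rightarrow> ('r \<Rightarrow> ('f::finite \<Rightarrow> bool) \<Rightarrow> real) \<Rightarrow> bool" where
  "has_overall_effect R A \<longleftrightarrow> (\<exists>c. \<forall>i\<in>cells. (\<Sum>W\<in>R. c W * A W i) = 1)"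

end

(* The log-linear parameters of p are the Moebius transform, over the Boolean lattice of
   nonempty feature sets, of V \<mapsto> log p(V), and log CASR(V | F \ V = 0) is exactly the
   V-th Moebius coefficient.  So HAS(F_asc) consists of the p whose log is a zeta transform
   of coefficients vanishing on F_asc, i.e. whose log lies in the row space of A.  The
   constant 1 is not of that form: its Moebius coefficient at the full feature set F,
   which belongs to F_asc, is -(-1)^|F| \<noteq> 0. *)

theory Submission
  imports Defs
begin

definition zeta :: "('a set \<Rightarrow> 'b::comm_ring_1) \<Rightarrow> 'a set \<Rightarrow> 'b" where
  "zeta b U = (\<Sum>W | W \<subseteq> U \<and> W \<noteq> {}. b W)"

definition mobius :: "('a set \<Rightarrow> 'b::comm_ring_1) \<Rightarrow> 'a set \<Rightarrow> 'b" where
  "mobius g V = (\<Sum>U | U \<subseteq> V \<and> U \<noteq> {}. (-1) ^ (card U + card V) * g U)"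

lemma mobius_empty [simp]: "mobius g {} = 0"
  by (simp add: mobius_def)

lemma zeta_empty [simp]: "zeta b {} = 0"
  by (simp add: zeta_def)

lemma mobius_cong:
  "(\<And>U. U \<subseteq> V \<Longrightarrow> U \<noteq> {} \<Longrightarrow> g U = h U) \<Longrightarrow> mobius g V = mobius h V"
  unfolding mobius_def by (rule sum.cong) auto

lemma sum_Pow_eq_sum_nonempty:
  assumes "finite S" "h {} = 0"
  shows "sum h (Pow S) = (\<Sum>T | T \<subseteq> S \<and> T \<noteq> {}. h T)"
  by (rule sum.mono_neutral_right) (use assms in auto)

text \<open>Both inversion formulas are instances of the involution
  \<open>f \<mapsto> (\<lambda>S. \<Sum>T\<in>Pow S. (-1) ^ card T * f T)\<close> of \<open>inclusion_exclusion_symmetric\<close>,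
  applied after extending the functions by \<open>0\<close> at the empty set.\<close>

lemma zeta_mobius:
  assumes "finite S" "S \<noteq> {}"
  shows "zeta (mobius g) S = g S"
proof -
  define g0 where "g0 T = (if T = {} then 0 else g T)" for T
  have signed: "(-1) ^ card S * mobius g S = (\<Sum>T\<in>Pow S. (-1) ^ card T * g0 T)"
    if "finite S" for S
    using that unfolding mobius_def sum_distrib_left
    by (subst sum_Pow_eq_sum_nonempty) (auto simp: g0_def power_add mult_ac intro!: sum.cong)
  have "g0 S = (\<Sum>T\<in>Pow S. (-1) ^ card T * ((-1) ^ card T * mobius g T))"
    by (rule inclusion_exclusion_symmetric[OF signed assms(1)])
  then show ?thesis
    using assms by (simp add: g0_def zeta_def sum_Pow_eq_sum_nonempty)
qed

lemma mobius_zeta: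
  assumes "finite V" "V \<noteq> {}"
  shows "mobius (zeta b) V = b V"
proof -
  define b0 where "b0 T = (if T = {} then 0 else b T)" for T
  have signed: "zeta b S = (\<Sum>T\<in>Pow S. (-1) ^ card T * ((-1) ^ card T * b0 T))"
    if "finite S" for S
    using that unfolding zeta_def
    by (subst sum_Pow_eq_sum_nonempty) (auto simp: b0_def intro!: sum.cong)
  have "(-1) ^ card V * b0 V = (\<Sum>T\<in>Pow V. (-1) ^ card T * zeta b T)"
    by (rule inclusion_exclusion_symmetric[OF signed assms(1)])
  then have "b0 V = (-1) ^ card V * (\<Sum>T\<in>Pow V. (-1) ^ card T * zeta b T)"
    by (metis left_minus_one_mult_self)
  then show ?thesis
    using assms
    by (simp add: b0_def mobius_def sum_Pow_eq_sum_nonempty sum_distrib_left power_add mult_ac)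
qed

lemma ex_zeta_vanishing_iff_mobius_eq_0:
  fixes g :: "'a::finite set \<Rightarrow> 'b::comm_ring_1"
  shows "(\<exists>b. (\<forall>W\<in>C. b W = 0) \<and> (\<forall>U. U \<noteq> {} \<longrightarrow> g U = zeta b U))
     \<longleftrightarrow> (\<forall>V\<in>C. mobius g V = 0)"
proof
  assume "\<exists>b. (\<forall>W\<in>C. b W = 0) \<and> (\<forall>U. U \<noteq> {} \<longrightarrow> g U = zeta b U)"
  then obtain b where b: "\<forall>W\<in>C. b W = 0" and g: "\<forall>U. U \<noteq> {} \<longrightarrow> g U = zeta b U"
    by blast
  have "mobius g V = b V" if "V \<noteq> {}" for V
    using mobius_cong[of V g "zeta b"] g mobius_zeta[OF finite that] by auto
  then show "\<forall>V\<in>C. mobius g V = 0"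
    using b by (metis mobius_empty)
next
  assume "\<forall>V\<in>C. mobius g V = 0"
  then show "\<exists>b. (\<forall>W\<in>C. b W = 0) \<and> (\<forall>U. U \<noteq> {} \<longrightarrow> g U = zeta b U)"
    by (intro exI[of _ "mobius g"]) (simp add: zeta_mobius)
qed

lemma sum_Pow_minus_one_power_card:
  assumes "finite V" "V \<noteq> {}"
  shows "(\<Sum>T\<in>Pow V. (-1::'b::ring_1) ^ card T) = 0"
  using card_subsupersets_even_odd[of V "{}"] assms
  by (intro sum_alternating_cancels) (auto simp: Pow_def)

lemma mobius_const_one:
  assumes "finite V" "V \<noteq> {}"
  shows "mobius (\<lambda>_. 1) V = - ((-1) ^ card V)"
proof -
  have "Pow V - {{}} = {T. T \<subseteq> V \<and> T \<noteq> {}}" by auto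
  then have "1 + (\<Sum>T | T \<subseteq> V \<and> T \<noteq> {}. (-1) ^ card T) = (0::'b::comm_ring_1)"
    using sum.remove[of "Pow V" "{}" "\<lambda>T. (-1::'b) ^ card T"] assms(1)
      sum_Pow_minus_one_power_card[OF assms, where 'b='b]
    by simp
  then have "(\<Sum>T | T \<subseteq> V \<and> T \<noteq> {}. (-1) ^ card T) = (-1::'b)"
    by (simp add: eq_neg_iff_add_eq_0 add.commute)
  then show ?thesis
    by (simp add: mobius_def power_add flip: sum_distrib_right)
qed

lemma CASR_eq_exp_mobius:
  fixes p :: "('f::finite \<Rightarrow> bool) \<Rightarrow> real"
  assumes "\<And>U. U \<noteq> {} \<Longrightarrow> cellp p U > 0"
  shows "CASR p V = exp (mobius (\<lambda>U. ln (cellp p U)) V)"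
proof -
  let ?E = "{U. U \<subseteq> V \<and> U \<noteq> {} \<and> even (card U + card V)}"
  let ?O = "{U. U \<subseteq> V \<and> U \<noteq> {} \<and> odd (card U + card V)}"
  have split: "{U. U \<subseteq> V \<and> U \<noteq> {}} = ?E \<union> ?O" by auto
  have "mobius (\<lambda>U. ln (cellp p U)) V = (\<Sum>U\<in>?E. ln (cellp p U)) - (\<Sum>U\<in>?O. ln (cellp p U))"
    unfolding mobius_def split
    by (subst sum.union_disjoint)
      (auto simp: sum_negf[symmetric] intro!: sum.cong arg_cong2[where f = plus])
  then show ?thesis
    using assms by (simp add: CASR_def exp_diff exp_sum)
qed

lemma indicator_in_cells: "(\<lambda>f. f \<in> U) \<in> cells \<longleftrightarrow> U \<noteq> {}"
  by (auto simp: cells_def fun_eq_iff)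

lemma ball_cells_iff:
  "(\<forall>i\<in>(cells :: ('f::finite \<Rightarrow> bool) set). P i) \<longleftrightarrow> (\<forall>U. U \<noteq> {} \<longrightarrow> P (\<lambda>f. f \<in> U))"
proof
  assume "\<forall>i\<in>cells. P i"
  then show "\<forall>U. U \<noteq> {} \<longrightarrow> P (\<lambda>f. f \<in> U)"
    by (simp add: indicator_in_cells)
next
  assume P: "\<forall>U. U \<noteq> {} \<longrightarrow> P (\<lambda>f. f \<in> U)"
  show "\<forall>i\<in>cells. P i"
  proof
    fix i :: "'f \<Rightarrow> bool"
    assume "i \<in> cells"
    moreover have "i = (\<lambda>f. f \<in> phi i)"
      by (simp add: phi_def)
    ultimately show "P i"
      using P indicator_in_cells by metis
  qed
qed

lemma pos_prob_dist_cellp_pos: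
  assumes "pos_prob_dist p" "U \<noteq> {}"
  shows "cellp p U > 0"
  using assms by (simp add: pos_prob_dist_def cellp_def indicator_in_cells)

lemma sum_Fdes_Amat_eq_zeta:
  fixes U :: "'f::finite set"
  shows "(\<Sum>W\<in>Fdes C. Amat W (\<lambda>f. f \<in> U) * \<beta> W) = zeta (\<lambda>W. if W \<in> C then 0 else \<beta> W) U"
proof -
  have "(\<Sum>W\<in>Fdes C. Amat W (\<lambda>f. f \<in> U) * \<beta> W) = sum \<beta> {W. W \<subseteq> U \<and> W \<noteq> {} \<and> W \<notin> C}"
    by (simp add: Amat_def phi_def Fdes_def Int_def conj_ac flip: of_bool_def)
  also have "\<dots> = zeta (\<lambda>W. if W \<in> C then 0 else \<beta> W) U"
    unfolding zeta_def by (rule sum.mono_neutral_cong_left) auto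
  finally show ?thesis .
qed

lemma ex_Amat_combination_iff_mobius_eq_0:
  fixes g :: "'f::finite set \<Rightarrow> real"
  shows "(\<exists>\<beta>. \<forall>U. U \<noteq> {} \<longrightarrow> g U = (\<Sum>W\<in>Fdes C. Amat W (\<lambda>f. f \<in> U) * \<beta> W))
     \<longleftrightarrow> (\<forall>V\<in>C. mobius g V = 0)"
  unfolding ex_zeta_vanishing_iff_mobius_eq_0[symmetric] sum_Fdes_Amat_eq_zeta
proof
  assume "\<exists>\<beta>. \<forall>U. U \<noteq> {} \<longrightarrow> g U = zeta (\<lambda>W. if W \<in> C then 0 else \<beta> W) U"
  then obtain \<beta> where "\<forall>U. U \<noteq> {} \<longrightarrow> g U = zeta (\<lambda>W. if W \<in> C then 0 else \<beta> W) U"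
    by blast
  then show "\<exists>b. (\<forall>W\<in>C. b W = 0) \<and> (\<forall>U. U \<noteq> {} \<longrightarrow> g U = zeta b U)"
    by (intro exI[of _ "\<lambda>W. if W \<in> C then 0 else \<beta> W"]) simp
next
  assume "\<exists>b. (\<forall>W\<in>C. b W = 0) \<and> (\<forall>U. U \<noteq> {} \<longrightarrow> g U = zeta b U)"
  then obtain b where "\<forall>W\<in>C. b W = 0" "\<forall>U. U \<noteq> {} \<longrightarrow> g U = zeta b U"
    by blast
  moreover from this(1) have "(\<lambda>W. if W \<in> C then 0 else b W) = b"
    by auto
  ultimately show "\<exists>\<beta>. \<forall>U. U \<noteq> {} \<longrightarrow> g U = zeta (\<lambda>W. if W \<in> C then 0 else \<beta> W) U"
    by metis
qed

lemma mem_HAS_iff: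
  "p \<in> HAS C \<longleftrightarrow> pos_prob_dist p \<and> (\<forall>V\<in>C. mobius (\<lambda>U. ln (cellp p U)) V = 0)"
proof -
  have "CASR p V = exp (mobius (\<lambda>U. ln (cellp p U)) V)" if "pos_prob_dist p" for V
    using CASR_eq_exp_mobius pos_prob_dist_cellp_pos[OF that] by blast
  then show ?thesis
    by (auto simp: HAS_def)
qed

lemma mem_relational_model_Fdes_Amat_iff:
  "p \<in> relational_model (Fdes C) Amat
     \<longleftrightarrow> pos_prob_dist p \<and> (\<forall>V\<in>C. mobius (\<lambda>U. ln (cellp p U)) V = 0)"
  by (simp add: relational_model_def ball_cells_iff cellp_def
      flip: ex_Amat_combination_iff_mobius_eq_0)

lemma HAS_eq_relational_model: "HAS C = relational_model (Fdes C) Amat"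
  by (auto simp: mem_HAS_iff mem_relational_model_Fdes_Amat_iff)

lemma not_has_overall_effect_Fdes_Amat:
  assumes "(UNIV :: 'f::finite set) \<in> C"
  shows "\<not> has_overall_effect (Fdes C) (Amat :: 'f set \<Rightarrow> ('f \<Rightarrow> bool) \<Rightarrow> real)"
proof
  assume "has_overall_effect (Fdes C) (Amat :: 'f set \<Rightarrow> ('f \<Rightarrow> bool) \<Rightarrow> real)"
  then obtain c :: "'f set \<Rightarrow> real"
    where "\<forall>i\<in>cells. (\<Sum>W\<in>Fdes C. c W * Amat W i) = 1"
    by (auto simp: has_overall_effect_def)
  then have "\<forall>U. U \<noteq> {} \<longrightarrow> 1 = (\<Sum>W\<in>Fdes C. Amat W (\<lambda>f. f \<in> U) * c W)"
    by (simp add: ball_cells_iff mult.commute)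
  then have "mobius (\<lambda>_. 1::real) (UNIV :: 'f set) = 0"
    using assms ex_Amat_combination_iff_mobius_eq_0[of "\<lambda>_. 1" C] by blast
  then show False
    by (simp add: mobius_const_one)
qed

theorem theorem4:
  fixes Fasc :: "'f::finite set set"
  assumes "Fasc \<noteq> {}"
    and "\<forall>V\<in>Fasc. V \<noteq> {}"
    and "ascending Fasc"
  shows "HAS Fasc = relational_model (Fdes Fasc) Amat
         \<and> \<not> has_overall_effect (Fdes Fasc) (Amat :: 'f set \<Rightarrow> ('f \<Rightarrow> bool) \<Rightarrow> real)"
proof -
  obtain V where "V \<in> Fasc"
    using assms(1) by blast
  then have "UNIV \<in> Fasc"
    using assms(3) unfolding ascending_def by blast
  then show ?thesis
    by (simp add: HAS_eq_relational_model not_has_overall_effect_Fdes_Amat)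
qed

end
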